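(* Let $\mathcal{A}$ be a bounded-spread implementation of a logical operator $\bar{A}$ on a stabiliser code family. Then for every logical Pauli operator $\bar{P}$, $\bar{P}\in\mathbf{P}_\downarrow$ implies $\bar{A}\bar{P}\bar{A}^\dagger\in\mathbf{L}_\downarrow$.
   Context: A code family is a sequence $(\mathcal{C}_l)_{l\in\mathbb{N}}$ of stabiliser codes, $\mathcal{C}_l$ acting on $n=n(l)$ physical qubits; $\mathbf{P}_n$ is the $n$-qubit Pauli group. Quantum channels are written in the Heisenberg picture, $\mathcal{A}(U)=\sum_iA_iUA_i^\dagger$, $\sum_iA_i^\dagger A_i=I$. A logical operator implementation of a logical operator $\bar{A}$ is a channel $\mathcal{A}$ such that, for every logical operator $\bar{U}$ and every representative (physical operator) $U$ of $\bar{U}$, $\mathcal{A}(U)$ is a representative of $\bar{A}\bar{U}\bar{A}^\dagger$ (its action on non-logical operators is arbitrary); it need not be unitary. The weight $\mathrm{wt}(O)$ is the number of qubits on which $O$ acts non-trivially. The spread of $E\in\mathbf{P}_n$ under $\mathcal{A}$ is $s_{\mathcal{A}}(E)=\mathrm{wt}(\mathcal{A}(E))/\mathrm{wt}(E)$, $s_{\mathcal{A}}=\max_{E\in\mathbf{P}_n}s_{\mathcal{A}}(E)$, and $\mathcal{A}$ has bounded spread if there is a constant $C$ independent of $l$ with $s_{\mathcal{A}}\le C$ for all $l$. For a logical operator $\bar{L}$ (specified for each $l$), its distance $d_{\bar{L}}$ is the minimum weight of a representative of $\bar{L}$; $d$ is the code distance. Let $\mathbf{L}$ be the set of logical operators,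 $\mathbf{L}_\downarrow=\{\bar{L}\in\mathbf{L}:\exists C\in\mathbb{R}\text{ such that } d_{\bar{L}}/d\le C\text{ for all }l\in\mathbb{N}\}$, and $\mathbf{P}_\downarrow$ the set of logical Pauli operators lying in $\mathbf{L}_\downarrow$. *)

theory Defs
  imports "Jordan_Normal_Form.Schur_Decomposition"
begin

text \<open>Basis index r < 2^n; bit j of r is the state of qubit j.\<close>

definition qbit :: "nat \<Rightarrow> nat \<Rightarrow> bool" where
  "qbit r j = odd (r div 2 ^ j)"

definition qclr :: "nat \<Rightarrow> nat \<Rightarrow> nat" where
  "qclr r j = (if qbit r j then r - 2 ^ j else r)"

text \<open>O acts trivially on qubit i: O = O' (tensor) I on qubit i.\<close>
definition acts_trivially_on :: "nat \<Rightarrow> nat \<Rightarrow> complex mat \<Rightarrow> bool" where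
  "acts_trivially_on n i M \<longleftrightarrow>
     (\<forall>r < 2 ^ n. \<forall>c < 2 ^ n.
        M $$ (r, c) = (if qbit r i = qbit c i then M $$ (qclr r i, qclr c i) else 0))"

definition wt :: "nat \<Rightarrow> complex mat \<Rightarrow> nat" where
  "wt n M = card {i. i < n \<and> \<not> acts_trivially_on n i M}"

text \<open>Single-qubit Paulis: 0 = I, 1 = X, 2 = Y, 3 = Z; entry (row a, column b).\<close>
fun sigma :: "nat \<Rightarrow> bool \<Rightarrow> bool \<Rightarrow> complex" where
  "sigma 0 a b = (if a = b then 1 else 0)"
| "sigma (Suc 0) a b = (if a \<noteq> b then 1 else 0)"
| "sigma (Suc (Suc 0)) a b = (if a = b then 0 else if a then \<i> else - \<i>)"
| "sigma _ a b = (if a = b then (if a then -1 else 1) else 0)"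

definition pauli_op :: "nat \<Rightarrow> nat \<Rightarrow> (nat \<Rightarrow> nat) \<Rightarrow> complex mat" where
  "pauli_op n k p = mat (2 ^ n) (2 ^ n)
     (\<lambda>(r, c). \<i> ^ k * (\<Prod>j<n. sigma (p j) (qbit r j) (qbit c j)))"

definition pauli_group :: "nat \<Rightarrow> complex mat set" where
  "pauli_group n = {pauli_op n k p | k p. k < 4 \<and> (\<forall>j<n. p j < 4)}"

definition stabiliser_group :: "nat \<Rightarrow> complex mat set \<Rightarrow> bool" where
  "stabiliser_group n S \<longleftrightarrow>
     S \<subseteq> pauli_group n \<and> 1\<^sub>m (2 ^ n) \<in> S \<and>
     (\<forall>a\<in>S. \<forall>b\<in>S. a * b \<in> S) \<and>
     (\<forall>a\<in>S. \<forall>b\<in>S. a * b = b * a) \<and>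
     - 1\<^sub>m (2 ^ n) \<notin> S"

definition codespace :: "nat \<Rightarrow> complex mat set \<Rightarrow> complex vec set" where
  "codespace n S = {v \<in> carrier_vec (2 ^ n). \<forall>s\<in>S. s *\<^sub>v v = v}"

text \<open>A physical operator that (together with its adjoint) preserves the code space,
  i.e. commutes with the code projector; it represents the logical operator given
  by its restriction to the code space.\<close>
definition is_logical :: "nat \<Rightarrow> complex mat set \<Rightarrow> complex mat \<Rightarrow> bool" where
  "is_logical n S U \<longleftrightarrow> U \<in> carrier_mat (2 ^ n) (2 ^ n) \<and>
     (\<forall>v\<in>codespace n S. U *\<^sub>v v \<in> codespace n S \<and> mat_adjoint U *\<^sub>v v \<in> codespace n S)"

definition represents :: "nat \<Rightarrow> complex mat set \<Rightarrow> complex mat \<Rightarrow> complex mat \<Rightarrow> bool" where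
  "represents n S U L \<longleftrightarrow> is_logical n S U \<and> (\<forall>v\<in>codespace n S. U *\<^sub>v v = L *\<^sub>v v)"

definition logical_pauli :: "nat \<Rightarrow> complex mat set \<Rightarrow> complex mat \<Rightarrow> bool" where
  "logical_pauli n S L \<longleftrightarrow> is_logical n S L \<and> (\<exists>P\<in>pauli_group n. represents n S P L)"

definition logical_unitary :: "nat \<Rightarrow> complex mat set \<Rightarrow> complex mat \<Rightarrow> bool" where
  "logical_unitary n S A \<longleftrightarrow> is_logical n S A \<and>
     represents n S (A * mat_adjoint A) (1\<^sub>m (2 ^ n)) \<and>
     represents n S (mat_adjoint A * A) (1\<^sub>m (2 ^ n))"

definition log_dist :: "nat \<Rightarrow> complex mat set \<Rightarrow> complex mat \<Rightarrow> nat" where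
  "log_dist n S L = (LEAST w. \<exists>U. represents n S U L \<and> wt n U = w)"

definition code_dist :: "nat \<Rightarrow> complex mat set \<Rightarrow> nat" where
  "code_dist n S = (LEAST w. \<exists>P\<in>pauli_group n. is_logical n S P \<and>
      \<not> (\<exists>c. represents n S P (c \<cdot>\<^sub>m 1\<^sub>m (2 ^ n))) \<and> wt n P = w)"

definition stabiliser_family :: "(nat \<Rightarrow> nat) \<Rightarrow> (nat \<Rightarrow> complex mat set) \<Rightarrow> bool" where
  "stabiliser_family n S \<longleftrightarrow> (\<forall>l. stabiliser_group (n l) (S l))"

definition L_down :: "(nat \<Rightarrow> nat) \<Rightarrow> (nat \<Rightarrow> complex mat set) \<Rightarrow> (nat \<Rightarrow> complex mat) set" where
  "L_down n S = {L. (\<forall>l. is_logical (n l) (S l) (L l)) \<and>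
     (\<exists>C::real. \<forall>l. real (log_dist (n l) (S l) (L l)) / real (code_dist (n l) (S l)) \<le> C)}"

definition P_down :: "(nat \<Rightarrow> nat) \<Rightarrow> (nat \<Rightarrow> complex mat set) \<Rightarrow> (nat \<Rightarrow> complex mat) set" where
  "P_down n S = {L \<in> L_down n S. \<forall>l. logical_pauli (n l) (S l) (L l)}"

section \<open>Channels (Heisenberg picture, Kraus form) and implementations\<close>

definition is_channel :: "nat \<Rightarrow> complex mat list \<Rightarrow> bool" where
  "is_channel n Ks \<longleftrightarrow> (\<forall>K\<in>set Ks. K \<in> carrier_mat (2 ^ n) (2 ^ n)) \<and>
     foldr (\<lambda>K B. mat_adjoint K * K + B) Ks (0\<^sub>m (2 ^ n) (2 ^ n)) = 1\<^sub>m (2 ^ n)"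

definition chan_apply :: "nat \<Rightarrow> complex mat list \<Rightarrow> complex mat \<Rightarrow> complex mat" where
  "chan_apply n Ks U = foldr (\<lambda>K B. K * U * mat_adjoint K + B) Ks (0\<^sub>m (2 ^ n) (2 ^ n))"

definition implements :: "nat \<Rightarrow> complex mat set \<Rightarrow> complex mat list \<Rightarrow> complex mat \<Rightarrow> bool" where
  "implements n S Ks A \<longleftrightarrow> is_channel n Ks \<and>
     (\<forall>L U. is_logical n S L \<longrightarrow> represents n S U L \<longrightarrow>
        represents n S (chan_apply n Ks U) (A * L * mat_adjoint A))"

text \<open>Spread of E under the channel (with 0/0 = 0 for weight-zero E, i.e. phases times I).\<close>
definition spread_at :: "nat \<Rightarrow> complex mat list \<Rightarrow> complex mat \<Rightarrow> real" where
  "spread_at n Ks E = real (wt n (chan_apply n Ks E)) / real (wt n E)"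

definition spread :: "nat \<Rightarrow> complex mat list \<Rightarrow> real" where
  "spread n Ks = Max (spread_at n Ks ` pauli_group n)"

definition bounded_spread :: "(nat \<Rightarrow> nat) \<Rightarrow> (nat \<Rightarrow> complex mat list) \<Rightarrow> bool" where
  "bounded_spread n Ks \<longleftrightarrow> (\<exists>C::real. \<forall>l. spread (n l) (Ks l) \<le> C)"

end

(* A minimum-weight representative U of a logical Pauli operator P need not be a Pauli
   operator, but it can be traded for one of no larger weight. Expand U in the Pauli basis
   on its support T and let Pi be the sum of the stabilisers, |S| times the code projector.
   As U agrees on the code space with a Pauli representative P0,
   tr(P0^dagger U Pi) = tr Pi = 2^n, which is nonzero; expanding the left-hand side, some
   s P0^dagger p has nonzero trace, with s a stabiliser and p a Pauli string supported in T.
   A Pauli operator with nonzero trace is a scalar, so Q = P0 s^dagger is a multiple of p: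
   a Pauli operator supported in T that acts as P0 on the code space.
   The channel maps Q to a representative of A P A^dagger of weight at most
   spread * wt Q <= spread * d_P (if wt Q = 0, then Q is a scalar and already represents
   A P A^dagger); dividing by the code distance gives the claim. *)

theory Submission
  imports Defs
begin

lemma qbit_eq_bit: "qbit r j = bit r j"
  by (simp add: qbit_def bit_iff_odd)

lemma qclr_eq_unset_bit: "qclr r j = unset_bit j r"
proof (cases "bit r j")
  case True
  have "r = set_bit j (unset_bit j r)"
    using True by (intro bit_eqI) (auto simp: bit_simps)
  also have "\<dots> = unset_bit j r + 2 ^ j"
    by (simp add: set_bit_eq bit_simps)
  finally show ?thesis using True by (simp add: qclr_def qbit_eq_bit)
next
  case False
  then have "unset_bit j r = r" by (intro bit_eqI) (auto simp: bit_simps)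
  then show ?thesis using False by (simp add: qclr_def qbit_eq_bit)
qed

lemma less_power2_iff_high_bits_zero: "(r::nat) < 2 ^ n \<longleftrightarrow> (\<forall>j\<ge>n. \<not> bit r j)"
  by (metis take_bit_nat_eq_self_iff bit_take_bit_iff bit_eq_iff not_le)

lemma eq_if_low_bits_eq:
  "(r::nat) < 2 ^ n \<Longrightarrow> c < 2 ^ n \<Longrightarrow> (\<forall>j<n. bit r j = bit c j) \<Longrightarrow> r = c"
  by (metis less_power2_iff_high_bits_zero bit_eq_iff not_less)

lemma unset_bit_less_power2: "(r::nat) < 2 ^ n \<Longrightarrow> unset_bit i r < 2 ^ n"
  by (auto simp: less_power2_iff_high_bits_zero bit_unset_bit_iff)

lemma sum_power2_prod_bits:
  "(\<Sum>m<2 ^ n. \<Prod>j<n. h j (bit (m::nat) j)) = (\<Prod>j<n. h j False + h j True :: 'a::comm_semiring_1)"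
proof (induction n arbitrary: h)
  case (Suc n)
  let ?t = "\<lambda>i::nat. \<Prod>j<n. h (Suc j) (bit i j)"
  have "(\<Sum>m::nat<2 ^ Suc n. \<Prod>j<Suc n. h j (bit m j)) =
      (\<Sum>i<2 ^ n. \<Sum>m\<in>{i * 2..<i * 2 + 2}. h 0 (bit m 0) * ?t (m div 2))"
    by (simp only: sum.nat_group power_Suc2 prod.lessThan_Suc_shift bit_Suc)
  also have "\<dots> = (\<Sum>i<2 ^ n. (h 0 False + h 0 True) * ?t i)"
  proof (intro sum.cong refl)
    fix i :: nat
    have "{i * 2..<i * 2 + 2} = {2 * i, 2 * i + 1}" by auto
    then show "(\<Sum>m\<in>{i * 2..<i * 2 + 2}. h 0 (bit m 0) * ?t (m div 2)) = (h 0 False + h 0 True) * ?t i"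
      by (simp add: bit_0 distrib_right)
  qed
  also have "\<dots> = (h 0 False + h 0 True) * (\<Prod>j<n. h (Suc j) False + h (Suc j) True)"
    by (simp add: Suc.IH[of "\<lambda>j. h (Suc j)"] flip: sum_distrib_left)
  finally show ?case by (simp only: prod.lessThan_Suc_shift)
qed simp

lemma acts_trivially_on_iff:
  "acts_trivially_on n j M \<longleftrightarrow> (\<forall>r < 2 ^ n. \<forall>c < 2 ^ n.
     M $$ (r, c) = (if bit r j = bit c j then M $$ (unset_bit j r, unset_bit j c) else 0))"
  by (simp add: acts_trivially_on_def qbit_eq_bit qclr_eq_unset_bit)

lemma acts_trivially_onD:
  "acts_trivially_on n j M \<Longrightarrow> r < 2 ^ n \<Longrightarrow> c < 2 ^ n \<Longrightarrow>
   M $$ (r, c) = (if bit r j = bit c j then M $$ (unset_bit j r, unset_bit j c) else 0)"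
  by (simp add: acts_trivially_on_iff)

lemma acts_trivially_on_smult:
  assumes "M \<in> carrier_mat (2 ^ n) (2 ^ n)" and "acts_trivially_on n j M"
  shows "acts_trivially_on n j (a \<cdot>\<^sub>m M)"
  unfolding acts_trivially_on_iff
proof (intro allI impI)
  fix r c :: nat assume "r < 2 ^ n" "c < 2 ^ n"
  then show "(a \<cdot>\<^sub>m M) $$ (r, c) =
      (if bit r j = bit c j then (a \<cdot>\<^sub>m M) $$ (unset_bit j r, unset_bit j c) else 0)"
    using assms acts_trivially_onD unset_bit_less_power2 by simp
qed

lemma acts_trivially_on_all_imp_scalar:
  assumes M: "M \<in> carrier_mat (2 ^ n) (2 ^ n)" and triv: "\<forall>j<n. acts_trivially_on n j M"
  shows "M = M $$ (0, 0) \<cdot>\<^sub>m 1\<^sub>m (2 ^ n)"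
proof -
  have diag: "M $$ (r, r) = M $$ (0, 0)" if "r < 2 ^ n" for r
    using that
  proof (induction r rule: less_induct)
    case (less r)
    show ?case
    proof (cases "r = 0")
      case False
      then obtain j where j: "j < n" "bit r j"
        using eq_if_low_bits_eq[OF less.prems, of 0] by auto
      have "unset_bit j r = r - 2 ^ j"
        using j(2) qclr_eq_unset_bit[of r j] by (simp add: qclr_def qbit_eq_bit)
      then have lt: "unset_bit j r < r" using False by simp
      have "M $$ (r, r) = M $$ (unset_bit j r, unset_bit j r)"
        using acts_trivially_onD[of n j M r r] triv j(1) less.prems by simp
      also have "\<dots> = M $$ (0, 0)"
        using less.IH[OF lt] lt less.prems by simp
      finally show ?thesis .
    qed simp
  qed
  show ?thesis
  proof (rule eq_matI)
    fix r c assume "r < dim_row (M $$ (0, 0) \<cdot>\<^sub>m 1\<^sub>m (2 ^ n))" "c < dim_col (M $$ (0, 0) \<cdot>\<^sub>m 1\<^sub>m (2 ^ n))"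
    then have r: "r < 2 ^ n" and c: "c < 2 ^ n" by simp_all
    show "M $$ (r, c) = (M $$ (0, 0) \<cdot>\<^sub>m 1\<^sub>m (2 ^ n)) $$ (r, c)"
    proof (cases "r = c")
      case False
      then obtain j where "j < n" "bit r j \<noteq> bit c j" using eq_if_low_bits_eq[OF r c] by blast
      then show ?thesis using acts_trivially_onD[of n j M, OF _ r c] triv r c False by simp
    qed (use diag[OF r] r in simp)
  qed (use M in auto)
qed

lemma index_mult_mat_sum:
  "A \<in> carrier_mat m k \<Longrightarrow> B \<in> carrier_mat k n \<Longrightarrow> i < m \<Longrightarrow> j < n \<Longrightarrow>
   (A * B) $$ (i, j) = (\<Sum>l<k. A $$ (i, l) * B $$ (l, j))"
  by (simp add: scalar_prod_def atLeast0LessThan)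

lemma mat_adjoint_carrier: "A \<in> carrier_mat m n \<Longrightarrow> mat_adjoint A \<in> carrier_mat n m"
  unfolding mat_adjoint_def carrier_mat_def by simp

lemma index_mat_adjoint:
  "A \<in> carrier_mat m n \<Longrightarrow> i < n \<Longrightarrow> j < m \<Longrightarrow> mat_adjoint A $$ (i, j) = cnj (A $$ (j, i))"
  by (simp add: mat_adjoint_def mat_of_rows_index)

lemma mat_adjoint_mult:
  fixes A B :: "complex mat"
  assumes A: "A \<in> carrier_mat m k" and B: "B \<in> carrier_mat k n"
  shows "mat_adjoint (A * B) = mat_adjoint B * mat_adjoint A"
proof (rule eq_matI)
  note A' = mat_adjoint_carrier[OF A] and B' = mat_adjoint_carrier[OF B]
  fix i j assume "i < dim_row (mat_adjoint B * mat_adjoint A)" "j < dim_col (mat_adjoint B * mat_adjoint A)"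
  then have i: "i < n" and j: "j < m" using A' B' by auto
  have "mat_adjoint (A * B) $$ (i, j) = cnj ((A * B) $$ (j, i))"
    by (rule index_mat_adjoint[OF mult_carrier_mat[OF A B] i j])
  also have "\<dots> = (\<Sum>l<k. cnj (B $$ (l, i)) * cnj (A $$ (j, l)))"
    by (simp only: index_mult_mat_sum[OF A B j i] cnj_sum complex_cnj_mult mult.commute)
  also have "\<dots> = (\<Sum>l<k. mat_adjoint B $$ (i, l) * mat_adjoint A $$ (l, j))"
    by (intro sum.cong refl) (simp add: index_mat_adjoint[OF A] index_mat_adjoint[OF B] i j)
  also have "\<dots> = (mat_adjoint B * mat_adjoint A) $$ (i, j)"
    by (rule index_mult_mat_sum[OF B' A' i j, symmetric])
  finally show "mat_adjoint (A * B) $$ (i, j) = (mat_adjoint B * mat_adjoint A) $$ (i, j)" .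
qed (use mat_adjoint_carrier[OF A] mat_adjoint_carrier[OF B] mat_adjoint_carrier[OF mult_carrier_mat[OF A B]] in auto)

lemma mat_adjoint_adjoint:
  fixes A :: "complex mat"
  assumes A: "A \<in> carrier_mat m n"
  shows "mat_adjoint (mat_adjoint A) = A"
  using A mat_adjoint_carrier[OF mat_adjoint_carrier[OF A]]
  by (intro eq_matI) (auto simp: index_mat_adjoint[OF mat_adjoint_carrier[OF A]] index_mat_adjoint[OF A])

lemma mult_mat_vec_assoc3:
  assumes "A \<in> carrier_mat n n" "B \<in> carrier_mat n n" "C \<in> carrier_mat n n" "v \<in> carrier_vec n"
  shows "(A * B * C) *\<^sub>v v = A *\<^sub>v (B *\<^sub>v (C *\<^sub>v v))"
  using assms by (simp add: assoc_mult_mat_vec[of _ n n _ n])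

definition mat_trace :: "'a::comm_ring_1 mat \<Rightarrow> 'a" where
  "mat_trace A = (\<Sum>i<dim_row A. A $$ (i, i))"

lemma mat_trace_mult_comm:
  assumes A: "A \<in> carrier_mat m n" and B: "B \<in> carrier_mat n m"
  shows "mat_trace (A * B) = mat_trace (B * A)"
proof -
  have "mat_trace (A * B) = (\<Sum>i<m. \<Sum>l<n. A $$ (i, l) * B $$ (l, i))"
    unfolding mat_trace_def using A
    by (intro sum.cong) (auto simp: index_mult_mat_sum[OF A B] simp del: index_mult_mat(1))
  also have "\<dots> = (\<Sum>l<n. \<Sum>i<m. B $$ (l, i) * A $$ (i, l))"
    by (subst sum.swap) (simp add: mult.commute)
  also have "\<dots> = mat_trace (B * A)"
    unfolding mat_trace_def using B
    by (intro sum.cong) (auto simp: index_mult_mat_sum[OF B A] simp del: index_mult_mat(1))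
  finally show ?thesis .
qed

lemma smult_one_mat [simp]: "(1::'a::semiring_1) \<cdot>\<^sub>m A = A"
  by (rule eq_matI) auto

lemma smult_smult_mat: "a \<cdot>\<^sub>m (b \<cdot>\<^sub>m A) = (a * b :: 'a::semigroup_mult) \<cdot>\<^sub>m A"
  by (rule eq_matI) (auto simp: mult.assoc)

lemma scalar_mat_commute:
  fixes A :: "'a::comm_semiring_1 mat"
  assumes A: "A \<in> carrier_mat m m"
  shows "(a \<cdot>\<^sub>m 1\<^sub>m m) * A = A * (a \<cdot>\<^sub>m 1\<^sub>m m)"
proof -
  have "(a \<cdot>\<^sub>m 1\<^sub>m m) * A = a \<cdot>\<^sub>m A"
    using mult_smult_assoc_mat[OF one_carrier_mat A] A by simp
  moreover have "A * (a \<cdot>\<^sub>m 1\<^sub>m m) = a \<cdot>\<^sub>m A"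
    using mult_smult_distrib[OF A one_carrier_mat] A by simp
  ultimately show ?thesis by simp
qed

section \<open>Pauli operators and the Pauli group\<close>

lemma pauli_op_carrier: "pauli_op n k p \<in> carrier_mat (2 ^ n) (2 ^ n)"
  by (simp add: pauli_op_def)

lemma index_pauli_op:
  "r < 2 ^ n \<Longrightarrow> c < 2 ^ n \<Longrightarrow>
   pauli_op n k p $$ (r, c) = \<i> ^ k * (\<Prod>j<n. sigma (p j) (bit r j) (bit c j))"
  by (simp add: pauli_op_def qbit_eq_bit)

definition sigma_mult_index :: "nat \<Rightarrow> nat \<Rightarrow> nat" where
  "sigma_mult_index a b = (if a = 0 then b else if b = 0 then a else if a = b then 0 else 6 - a - b)"

definition sigma_mult_phase :: "nat \<Rightarrow> nat \<Rightarrow> nat" where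
  "sigma_mult_phase a b =
     (if (a, b) \<in> {(1, 2), (2, 3), (3, 1)} then 1
      else if (a, b) \<in> {(2, 1), (3, 2), (1, 3)} then 3 else 0)"

lemma sigma_mult_index_less: "a < 4 \<Longrightarrow> b < 4 \<Longrightarrow> sigma_mult_index a b < 4"
  by (auto simp: sigma_mult_index_def)

lemma sigma_mult_index_same [simp]: "sigma_mult_index a a = 0"
  by (simp add: sigma_mult_index_def)

lemma sigma_mult_phase_same [simp]: "sigma_mult_phase a a = 0"
  by (simp add: sigma_mult_phase_def)

lemma less_4_cases: "(a::nat) < 4 \<Longrightarrow> a = 0 \<or> a = 1 \<or> a = 2 \<or> a = 3"
  by auto

lemma sigma_mult:
  assumes "a < 4" "b < 4"
  shows "sigma a r False * sigma b False c + sigma a r True * sigma b True c =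
    \<i> ^ sigma_mult_phase a b * sigma (sigma_mult_index a b) r c"
  by (insert less_4_cases[OF assms(1)] less_4_cases[OF assms(2)],
      (cases r; cases c; elim disjE;
       simp add: sigma_mult_phase_def sigma_mult_index_def numeral_eq_Suc power3_eq_cube))

lemma cnj_sigma: "cnj (sigma a x y) = sigma a y x"
  by (cases "(a, x, y)" rule: sigma.cases) auto

lemma pauli_op_mult:
  assumes p: "\<forall>j<n. p j < 4" and q: "\<forall>j<n. q j < 4"
  shows "pauli_op n k p * pauli_op n k' q =
    pauli_op n (k + k' + (\<Sum>j<n. sigma_mult_phase (p j) (q j))) (\<lambda>j. sigma_mult_index (p j) (q j))"
    (is "_ = pauli_op n ?k ?pq")
proof (rule eq_matI)
  fix r c assume "r < dim_row (pauli_op n ?k ?pq)" "c < dim_col (pauli_op n ?k ?pq)"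
  then have r: "r < 2 ^ n" and c: "c < 2 ^ n" by (auto simp: pauli_op_def)
  let ?f = "\<lambda>j x. sigma (p j) (bit r j) x * sigma (q j) x (bit c j)"
  have "(pauli_op n k p * pauli_op n k' q) $$ (r, c) =
      (\<Sum>m::nat<2 ^ n. (\<i> ^ k * \<i> ^ k') * (\<Prod>j<n. ?f j (bit m j)))"
    by (auto simp: index_mult_mat_sum[OF pauli_op_carrier pauli_op_carrier r c]
        index_pauli_op r c prod.distrib intro!: sum.cong)
  also have "\<dots> = (\<i> ^ k * \<i> ^ k') * (\<Prod>j<n. ?f j False + ?f j True)"
    by (simp only: sum_power2_prod_bits[of ?f n] flip: sum_distrib_left)
  also have "\<dots> = (\<i> ^ k * \<i> ^ k') *
      (\<Prod>j<n. \<i> ^ sigma_mult_phase (p j) (q j) * sigma (?pq j) (bit r j) (bit c j))"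
    using p q by (intro arg_cong2[where f = "(*)"] prod.cong refl sigma_mult) auto
  also have "\<dots> = pauli_op n ?k ?pq $$ (r, c)"
    by (simp add: index_pauli_op r c prod.distrib power_add power_sum)
  finally show "(pauli_op n k p * pauli_op n k' q) $$ (r, c) = pauli_op n ?k ?pq $$ (r, c)" .
qed (auto simp: pauli_op_def)

lemma mat_adjoint_pauli_op: "mat_adjoint (pauli_op n k p) = pauli_op n (3 * k) p"
proof (rule eq_matI)
  fix r c assume "r < dim_row (pauli_op n (3 * k) p)" "c < dim_col (pauli_op n (3 * k) p)"
  then have r: "r < 2 ^ n" and c: "c < 2 ^ n" by (auto simp: pauli_op_def)
  have "cnj (\<i> ^ k) = \<i> ^ (3 * k)"
    by (simp add: power_mult power3_eq_cube)
  then show "mat_adjoint (pauli_op n k p) $$ (r, c) = pauli_op n (3 * k) p $$ (r, c)"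
    by (simp add: index_mat_adjoint[OF pauli_op_carrier r c] index_pauli_op r c cnj_sigma)
qed (auto simp: mat_adjoint_def pauli_op_def)

lemma pauli_op_identity: "\<forall>j<n. p j = 0 \<Longrightarrow> pauli_op n k p = \<i> ^ k \<cdot>\<^sub>m 1\<^sub>m (2 ^ n)"
proof (rule eq_matI)
  fix r c assume id: "\<forall>j<n. p j = 0"
    and "r < dim_row (\<i> ^ k \<cdot>\<^sub>m 1\<^sub>m (2 ^ n))" "c < dim_col (\<i> ^ k \<cdot>\<^sub>m 1\<^sub>m (2 ^ n) :: complex mat)"
  then have r: "r < 2 ^ n" and c: "c < 2 ^ n" by auto
  have "(\<Prod>j<n. sigma (p j) (bit r j) (bit c j)) = (if r = c then 1 else 0)"
  proof (cases "r = c")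
    case False
    then obtain j where j: "j < n" "bit r j \<noteq> bit c j" using eq_if_low_bits_eq[OF r c] by blast
    then have "sigma (p j) (bit r j) (bit c j) = 0" using id by simp
    then show ?thesis using j(1) False by (auto simp: prod_zero_iff)
  qed (simp add: id)
  then show "pauli_op n k p $$ (r, c) = (\<i> ^ k \<cdot>\<^sub>m 1\<^sub>m (2 ^ n)) $$ (r, c)"
    by (simp add: index_pauli_op r c)
qed (auto simp: pauli_op_def)

lemma pauli_op_phase_mod: "pauli_op n k p = pauli_op n (k mod 4) p"
proof -
  have "\<i> ^ k = \<i> ^ (4 * (k div 4) + k mod 4)"
    by simp
  also have "\<dots> = \<i> ^ (k mod 4)"
    by (simp only: power_add power_mult) simp
  finally show ?thesis by (simp add: pauli_op_def)
qed

lemma pauli_op_acts_trivially_on: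
  assumes "p j = 0"
  shows "acts_trivially_on n j (pauli_op n k p)"
  unfolding acts_trivially_on_iff
proof (intro allI impI)
  fix r c :: nat assume r: "r < 2 ^ n" and c: "c < 2 ^ n"
  have "(\<Prod>l<n. sigma (p l) (bit r l) (bit c l)) =
      (if bit r j = bit c j then (\<Prod>l<n. sigma (p l) (bit (unset_bit j r) l) (bit (unset_bit j c) l)) else 0)"
  proof (cases "j < n")
    case True
    have "(\<Prod>l\<in>{..<n} - {j}. sigma (p l) (bit (unset_bit j r) l) (bit (unset_bit j c) l)) =
        (\<Prod>l\<in>{..<n} - {j}. sigma (p l) (bit r l) (bit c l))"
      by (intro prod.cong) (auto simp: bit_unset_bit_iff)
    then show ?thesis
      using True assms by (simp add: prod.remove[of "{..<n}" j] bit_unset_bit_iff)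
  next
    case False
    then have "\<not> bit r j" "\<not> bit c j"
      using r c by (auto simp: less_power2_iff_high_bits_zero)
    moreover from this have "unset_bit j r = r" "unset_bit j c = c"
      by (auto intro!: bit_eqI simp: bit_unset_bit_iff)
    ultimately show ?thesis by simp
  qed
  then show "pauli_op n k p $$ (r, c) =
      (if bit r j = bit c j then pauli_op n k p $$ (unset_bit j r, unset_bit j c) else 0)"
    by (simp add: index_pauli_op r c unset_bit_less_power2)
qed

lemma pauli_op_mat_trace:
  "mat_trace (pauli_op n k p) = \<i> ^ k * (\<Prod>j<n. sigma (p j) False False + sigma (p j) True True)"
proof -
  have "mat_trace (pauli_op n k p) = (\<Sum>r::nat<2 ^ n. \<i> ^ k * (\<Prod>j<n. sigma (p j) (bit r j) (bit r j)))"
    by (simp add: mat_trace_def pauli_op_def qbit_eq_bit)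
  then show ?thesis
    by (simp add: sum_power2_prod_bits[of "\<lambda>j x. sigma (p j) x x"] flip: sum_distrib_left)
qed

lemma pauli_groupI: "k < 4 \<Longrightarrow> \<forall>j<n. p j < 4 \<Longrightarrow> pauli_op n k p \<in> pauli_group n"
  unfolding pauli_group_def by blast

lemma pauli_groupE:
  assumes "P \<in> pauli_group n"
  obtains k p where "P = pauli_op n k p" "k < 4" "\<forall>j<n. p j < 4"
  using assms unfolding pauli_group_def by blast

lemma pauli_group_carrier: "P \<in> pauli_group n \<Longrightarrow> P \<in> carrier_mat (2 ^ n) (2 ^ n)"
  by (auto elim: pauli_groupE simp: pauli_op_carrier)

definition pauli_strings :: "nat set \<Rightarrow> (nat \<Rightarrow> nat) set" where
  "pauli_strings T = {p. \<forall>j. (j \<in> T \<longrightarrow> p j < 4) \<and> (j \<notin> T \<longrightarrow> p j = 0)}"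

lemma finite_pauli_strings:
  assumes "finite T"
  shows "finite (pauli_strings T)"
proof -
  have "pauli_strings T = {p. \<forall>j. (j \<in> T \<longrightarrow> p j \<in> {..<4}) \<and> (j \<notin> T \<longrightarrow> p j = 0)}"
    by (auto simp: pauli_strings_def)
  show ?thesis
    unfolding \<open>pauli_strings T = _\<close> by (rule finite_set_of_finite_funs) (use assms in auto)
qed

lemma finite_pauli_group: "finite (pauli_group n)"
proof -
  have "pauli_group n \<subseteq> (\<lambda>(k, p). pauli_op n k p) ` ({..<4} \<times> pauli_strings {..<n})"
  proof
    fix P assume "P \<in> pauli_group n"
    then obtain k p where P: "P = pauli_op n k p" "k < 4" "\<forall>j<n. p j < 4"
      by (rule pauli_groupE)
    let ?p = "\<lambda>j. if j < n then p j else 0"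
    have "P = pauli_op n k ?p"
      unfolding P pauli_op_def by (intro cong_mat refl) (auto intro!: prod.cong)
    moreover have "(k, ?p) \<in> {..<4} \<times> pauli_strings {..<n}"
      using P by (auto simp: pauli_strings_def)
    ultimately show "P \<in> (\<lambda>(k, p). pauli_op n k p) ` ({..<4} \<times> pauli_strings {..<n})"
      by force
  qed
  then show ?thesis
    by (rule finite_subset) (simp add: finite_pauli_strings)
qed

lemma pauli_group_mult: "P \<in> pauli_group n \<Longrightarrow> Q \<in> pauli_group n \<Longrightarrow> P * Q \<in> pauli_group n"
  by (elim pauli_groupE, simp only: pauli_op_mult, subst pauli_op_phase_mod)
     (auto intro!: pauli_groupI sigma_mult_index_less)

lemma pauli_group_mat_adjoint: "P \<in> pauli_group n \<Longrightarrow> mat_adjoint P \<in> pauli_group n"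
  by (elim pauli_groupE, simp only: mat_adjoint_pauli_op, subst pauli_op_phase_mod)
     (auto intro!: pauli_groupI)

lemma pauli_group_unitary:
  assumes "P \<in> pauli_group n"
  shows "mat_adjoint P * P = 1\<^sub>m (2 ^ n)" and "P * mat_adjoint P = 1\<^sub>m (2 ^ n)"
proof -
  obtain k p where P: "P = pauli_op n k p" "\<forall>j<n. p j < 4"
    using assms by (rule pauli_groupE)
  have "\<i> ^ (4 * k) = 1" by (simp add: power_mult)
  then show "mat_adjoint P * P = 1\<^sub>m (2 ^ n)" "P * mat_adjoint P = 1\<^sub>m (2 ^ n)"
    using P by (simp_all add: mat_adjoint_pauli_op pauli_op_mult pauli_op_identity algebra_simps)
qed

lemma pauli_group_mat_trace_nonzero:
  assumes "P \<in> pauli_group n" and "mat_trace P \<noteq> 0"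
  shows "\<exists>k<4. P = \<i> ^ k \<cdot>\<^sub>m 1\<^sub>m (2 ^ n)"
proof -
  obtain k p where P: "P = pauli_op n k p" "k < 4" "\<forall>j<n. p j < 4"
    using assms(1) by (rule pauli_groupE)
  have "p j = 0" if "j < n" for j
  proof (rule ccontr)
    assume "p j \<noteq> 0"
    then have "sigma (p j) False False + sigma (p j) True True = 0"
      using P(3) that by (cases "(p j, False, False)" rule: sigma.cases) auto
    then show False
      using assms(2) that by (auto simp: P(1) pauli_op_mat_trace intro: prod_zero)
  qed
  then show ?thesis using P(1,2) pauli_op_identity by blast
qed

lemma pauli_group_mult_mat_trace_nonzero:
  assumes P: "P \<in> pauli_group n" and Q: "Q \<in> pauli_group n" and tr: "mat_trace (P * Q) \<noteq> 0"
  shows "\<exists>a. mat_adjoint P = a \<cdot>\<^sub>m Q"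
proof -
  obtain k where PQ: "P * Q = \<i> ^ k \<cdot>\<^sub>m 1\<^sub>m (2 ^ n)"
    using pauli_group_mat_trace_nonzero[OF pauli_group_mult[OF P Q] tr] by blast
  have Pc: "P \<in> carrier_mat (2 ^ n) (2 ^ n)" and Qc: "Q \<in> carrier_mat (2 ^ n) (2 ^ n)"
    using P Q by (simp_all add: pauli_group_carrier)
  have "Q = mat_adjoint P * (P * Q)"
    using Pc Qc mat_adjoint_carrier[OF Pc] pauli_group_unitary(1)[OF P]
    by (simp flip: assoc_mult_mat[of _ "2 ^ n" "2 ^ n"])
  also have "\<dots> = \<i> ^ k \<cdot>\<^sub>m mat_adjoint P"
    using PQ mat_adjoint_carrier[OF Pc] by (simp add: mult_smult_distrib[OF _ one_carrier_mat])
  finally have "inverse (\<i> ^ k) \<cdot>\<^sub>m Q = mat_adjoint P"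
    by (simp add: smult_smult_mat)
  then show ?thesis by metis
qed

section \<open>Expansion in the Pauli basis\<close>

definition put_bit :: "nat \<Rightarrow> bool \<Rightarrow> nat \<Rightarrow> nat" where
  "put_bit i b r = (if b then set_bit i r else unset_bit i r)"

lemma bit_put_bit_iff: "bit (put_bit i b r) l \<longleftrightarrow> (if l = i then b else bit r l)"
  by (auto simp: put_bit_def bit_set_bit_iff bit_unset_bit_iff)

lemma put_bit_less_power2: "(r::nat) < 2 ^ n \<Longrightarrow> i < n \<Longrightarrow> put_bit i b r < 2 ^ n"
  by (auto simp: less_power2_iff_high_bits_zero bit_put_bit_iff)

lemma put_bit_bit_self: "put_bit i (bit r i) r = r"
  by (rule bit_eqI) (simp add: bit_put_bit_iff)

lemma put_bit_unset_bit_same: "put_bit i b (unset_bit i r) = put_bit i b r"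
  by (rule bit_eqI) (simp add: bit_put_bit_iff bit_unset_bit_iff)

lemma unset_bit_put_bit_other: "j \<noteq> i \<Longrightarrow> unset_bit j (put_bit i b r) = put_bit i b (unset_bit j r)"
  by (rule bit_eqI) (auto simp: bit_put_bit_iff bit_unset_bit_iff)

lemma sigma_completeness:
  "(\<Sum>k<4. sigma k a b * sigma k y x) = (if a = x \<and> b = y then 2 else 0)"
  by (cases a; cases b; cases x; cases y) (simp_all add: numeral_eq_Suc)

text \<open>Writing \<open>M = \<Sum>\<^sub>k \<sigma>\<^sub>k \<otimes> M\<^sub>k\<close> with \<open>\<sigma>\<^sub>k\<close> acting on qubit \<open>i\<close>, the component
  \<open>M\<^sub>k = tr\<^sub>i((\<sigma>\<^sub>k \<otimes> I) M) / 2\<close>, as an operator acting trivially on qubit \<open>i\<close>.\<close>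
definition qubit_component :: "nat \<Rightarrow> complex mat \<Rightarrow> nat \<Rightarrow> nat \<Rightarrow> complex mat" where
  "qubit_component n M i k = mat (2 ^ n) (2 ^ n) (\<lambda>(r, c).
     if bit r i = bit c i
     then (\<Sum>a\<in>UNIV. \<Sum>b\<in>UNIV. sigma k b a * M $$ (put_bit i a r, put_bit i b c)) / 2
     else 0)"

lemma qubit_component_carrier: "qubit_component n M i k \<in> carrier_mat (2 ^ n) (2 ^ n)"
  by (simp add: qubit_component_def)

lemma index_qubit_component:
  "r < 2 ^ n \<Longrightarrow> c < 2 ^ n \<Longrightarrow> qubit_component n M i k $$ (r, c) =
     (if bit r i = bit c i
      then (\<Sum>a\<in>UNIV. \<Sum>b\<in>UNIV. sigma k b a * M $$ (put_bit i a r, put_bit i b c)) / 2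
      else 0)"
  by (simp add: qubit_component_def)

lemma qubit_component_expansion:
  assumes r: "r < 2 ^ n" and c: "c < 2 ^ n"
  shows "M $$ (r, c) =
    (\<Sum>k<4. sigma k (bit r i) (bit c i) * qubit_component n M i k $$ (unset_bit i r, unset_bit i c))"
proof -
  let ?M = "\<lambda>a b. M $$ (put_bit i a r, put_bit i b c)"
  have "(\<Sum>k<4. sigma k (bit r i) (bit c i) * qubit_component n M i k $$ (unset_bit i r, unset_bit i c)) =
      (\<Sum>k<4. \<Sum>a\<in>UNIV. \<Sum>b\<in>UNIV. sigma k (bit r i) (bit c i) * sigma k b a * ?M a b / 2)"
    by (simp add: index_qubit_component r c unset_bit_less_power2 bit_unset_bit_iff
        put_bit_unset_bit_same sum_distrib_left sum_divide_distrib mult.assoc)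
  also have "\<dots> = (\<Sum>a\<in>UNIV. \<Sum>b\<in>UNIV. (\<Sum>k<4. sigma k (bit r i) (bit c i) * sigma k b a) * ?M a b / 2)"
    by (simp add: sum.swap[of _ "{..<4}"] sum_distrib_right sum_divide_distrib)
  also have "\<dots> = ?M (bit r i) (bit c i)"
    by (simp add: sigma_completeness UNIV_bool)
  finally show ?thesis
    by (simp add: put_bit_bit_self)
qed

lemma qubit_component_acts_trivially_on_self: "acts_trivially_on n i (qubit_component n M i k)"
  unfolding acts_trivially_on_iff
  by (simp add: index_qubit_component unset_bit_less_power2 bit_unset_bit_iff put_bit_unset_bit_same)

lemma qubit_component_acts_trivially_on:
  assumes ji: "j \<noteq> i" and i: "i < n" and triv: "acts_trivially_on n j M"
  shows "acts_trivially_on n j (qubit_component n M i k)"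
  unfolding acts_trivially_on_iff
proof (intro allI impI)
  fix r c :: nat assume r: "r < 2 ^ n" and c: "c < 2 ^ n"
  have M: "M $$ (put_bit i a r, put_bit i b c) =
      (if bit r j = bit c j then M $$ (put_bit i a (unset_bit j r), put_bit i b (unset_bit j c)) else 0)"
    for a b
    using acts_trivially_onD[OF triv put_bit_less_power2[OF r i] put_bit_less_power2[OF c i]] ji
    by (simp add: bit_put_bit_iff unset_bit_put_bit_other)
  show "qubit_component n M i k $$ (r, c) = (if bit r j = bit c j
      then qubit_component n M i k $$ (unset_bit j r, unset_bit j c) else 0)"
    using ji by (simp add: index_qubit_component r c unset_bit_less_power2 bit_unset_bit_iff M)
qed

lemma pauli_op_fun_upd:
  assumes "p i = 0" and "i < n" and r: "r < 2 ^ n" and c: "c < 2 ^ n"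
  shows "sigma k (bit r i) (bit c i) * pauli_op n 0 p $$ (unset_bit i r, unset_bit i c) =
    pauli_op n 0 (p(i := k)) $$ (r, c)"
proof -
  have "(\<Prod>l\<in>{..<n} - {i}. sigma (p l) (bit (unset_bit i r) l) (bit (unset_bit i c) l)) =
      (\<Prod>l\<in>{..<n} - {i}. sigma ((p(i := k)) l) (bit r l) (bit c l))"
    by (intro prod.cong) (auto simp: bit_unset_bit_iff)
  then show ?thesis
    using assms by (simp add: index_pauli_op unset_bit_less_power2 prod.remove[of "{..<n}" i] bit_unset_bit_iff)
qed

lemma pauli_strings_empty: "pauli_strings {} = {\<lambda>_. 0}"
  by (auto simp: pauli_strings_def)

lemma pauli_strings_insert:
  assumes "i \<notin> T"
  shows "bij_betw (\<lambda>(k, p). p(i := k)) ({..<4} \<times> pauli_strings T) (pauli_strings (insert i T))"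
proof (rule bij_betw_imageI)
  show "inj_on (\<lambda>(k, p). p(i := k)) ({..<4} \<times> pauli_strings T)"
  proof (rule inj_onI, clarify)
    fix k p k' p' assume "p \<in> pauli_strings T" "p' \<in> pauli_strings T" and eq: "p(i := k) = p'(i := k')"
    then have "p i = 0" "p' i = 0" using assms by (auto simp: pauli_strings_def)
    then show "k = k' \<and> p = p'"
      using fun_cong[OF eq] by (metis fun_upd_apply ext)
  qed
  show "(\<lambda>(k, p). p(i := k)) ` ({..<4} \<times> pauli_strings T) = pauli_strings (insert i T)"
  proof
    show "(\<lambda>(k, p). p(i := k)) ` ({..<4} \<times> pauli_strings T) \<subseteq> pauli_strings (insert i T)"
      by (auto simp: pauli_strings_def)
    show "pauli_strings (insert i T) \<subseteq> (\<lambda>(k, p). p(i := k)) ` ({..<4} \<times> pauli_strings T)"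
    proof
      fix q assume "q \<in> pauli_strings (insert i T)"
      then have "(q i, q(i := 0)) \<in> {..<4} \<times> pauli_strings T"
        using assms by (auto simp: pauli_strings_def)
      then show "q \<in> (\<lambda>(k, p). p(i := k)) ` ({..<4} \<times> pauli_strings T)"
        by (rule rev_image_eqI) simp
    qed
  qed
qed

definition pauli_combination :: "nat \<Rightarrow> nat set \<Rightarrow> ((nat \<Rightarrow> nat) \<Rightarrow> complex) \<Rightarrow> complex mat" where
  "pauli_combination n T a =
     mat (2 ^ n) (2 ^ n) (\<lambda>(r, c). \<Sum>p\<in>pauli_strings T. a p * pauli_op n 0 p $$ (r, c))"

lemma pauli_combination_carrier: "pauli_combination n T a \<in> carrier_mat (2 ^ n) (2 ^ n)"
  by (simp add: pauli_combination_def)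

lemma index_pauli_combination:
  "r < 2 ^ n \<Longrightarrow> c < 2 ^ n \<Longrightarrow>
   pauli_combination n T a $$ (r, c) = (\<Sum>p\<in>pauli_strings T. a p * pauli_op n 0 p $$ (r, c))"
  by (simp add: pauli_combination_def)

lemma exists_pauli_combination:
  assumes "finite T" and "T \<subseteq> {..<n}" and "M \<in> carrier_mat (2 ^ n) (2 ^ n)"
    and "\<forall>j<n. j \<notin> T \<longrightarrow> acts_trivially_on n j M"
  shows "\<exists>a. M = pauli_combination n T a"
  using assms
proof (induction T arbitrary: M rule: finite_induct)
  case empty
  then have "M = M $$ (0, 0) \<cdot>\<^sub>m 1\<^sub>m (2 ^ n)"
    using acts_trivially_on_all_imp_scalar by auto
  also have "\<dots> = pauli_combination n {} (\<lambda>_. M $$ (0, 0))"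
    by (intro eq_matI) (auto simp: pauli_combination_def pauli_strings_empty pauli_op_identity)
  finally show ?case by blast
next
  case (insert i T)
  have i: "i < n" and T: "T \<subseteq> {..<n}" using insert.prems by auto
  have "acts_trivially_on n j (qubit_component n M i k)" if "j < n" "j \<notin> T" for j k
    using insert.prems(3) i that
    by (cases "j = i") (auto simp: qubit_component_acts_trivially_on_self intro!: qubit_component_acts_trivially_on)
  then have "\<exists>a. qubit_component n M i k = pauli_combination n T a" for k
    by (intro insert.IH[OF T qubit_component_carrier]) auto
  then obtain a where a: "\<And>k. qubit_component n M i k = pauli_combination n T (a k)"
    by metis
  have pi: "p i = 0" if "p \<in> pauli_strings T" for p
    using that insert.hyps by (auto simp: pauli_strings_def)
  let ?b = "\<lambda>q. a (q i) (q(i := 0))"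
  have "M $$ (r, c) = pauli_combination n (insert i T) ?b $$ (r, c)" if r: "r < 2 ^ n" and c: "c < 2 ^ n" for r c
  proof -
    have "M $$ (r, c) =
        (\<Sum>k<4. sigma k (bit r i) (bit c i) * pauli_combination n T (a k) $$ (unset_bit i r, unset_bit i c))"
      using qubit_component_expansion[OF r c, of M i] by (simp add: a)
    also have "\<dots> = (\<Sum>k<4. \<Sum>p\<in>pauli_strings T.
        a k p * (sigma k (bit r i) (bit c i) * pauli_op n 0 p $$ (unset_bit i r, unset_bit i c)))"
      by (simp add: index_pauli_combination r c unset_bit_less_power2 sum_distrib_left mult.left_commute)
    also have "\<dots> = (\<Sum>k<4. \<Sum>p\<in>pauli_strings T. ?b (p(i := k)) * pauli_op n 0 (p(i := k)) $$ (r, c))"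
      by (intro sum.cong refl) (simp add: pauli_op_fun_upd[OF pi i r c] pi fun_upd_idem)
    also have "\<dots> = (\<Sum>(k, p)\<in>{..<4} \<times> pauli_strings T. ?b (p(i := k)) * pauli_op n 0 (p(i := k)) $$ (r, c))"
      by (simp add: sum.cartesian_product)
    also have "\<dots> = (\<Sum>q\<in>pauli_strings (insert i T). ?b q * pauli_op n 0 q $$ (r, c))"
      using sum.reindex_bij_betw[OF pauli_strings_insert[OF insert.hyps(2)],
          of "\<lambda>q. ?b q * pauli_op n 0 q $$ (r, c)"]
      by (simp add: case_prod_beta)
    finally show ?thesis
      by (simp add: index_pauli_combination r c)
  qed
  then have "M = pauli_combination n (insert i T) ?b"
    using insert.prems(2) by (intro eq_matI) (auto simp: pauli_combination_def)
  then show ?case by blast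
qed

lemma mat_trace_mult_pauli_combination:
  assumes Z: "Z \<in> carrier_mat (2 ^ n) (2 ^ n)"
  shows "mat_trace (Z * pauli_combination n T a) = (\<Sum>p\<in>pauli_strings T. a p * mat_trace (Z * pauli_op n 0 p))"
proof -
  have "mat_trace (Z * pauli_combination n T a) =
      (\<Sum>r<2 ^ n. \<Sum>m<2 ^ n. \<Sum>p\<in>pauli_strings T. a p * (Z $$ (r, m) * pauli_op n 0 p $$ (m, r)))"
    unfolding mat_trace_def using Z
    by (intro sum.cong) (auto simp: index_mult_mat_sum[OF Z pauli_combination_carrier]
        index_pauli_combination sum_distrib_left algebra_simps simp del: index_mult_mat(1))
  also have "\<dots> = (\<Sum>p\<in>pauli_strings T. a p * (\<Sum>r<2 ^ n. \<Sum>m<2 ^ n. Z $$ (r, m) * pauli_op n 0 p $$ (m, r)))"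
    by (simp add: sum_distrib_left sum.swap[of _ "pauli_strings T"])
  also have "\<dots> = (\<Sum>p\<in>pauli_strings T. a p * mat_trace (Z * pauli_op n 0 p))"
    unfolding mat_trace_def using Z
    by (intro sum.cong refl arg_cong2[where f = "(*)"] sum.cong)
       (auto simp: index_mult_mat_sum[OF Z pauli_op_carrier] simp del: index_mult_mat(1))
  finally show ?thesis .
qed

section \<open>Stabiliser groups\<close>

text \<open>For a stabiliser group \<open>S\<close> this is \<open>|S|\<close> times the projector onto the code space.\<close>
definition stabiliser_sum :: "nat \<Rightarrow> complex mat set \<Rightarrow> complex mat" where
  "stabiliser_sum n S = mat (2 ^ n) (2 ^ n) (\<lambda>(r, c). \<Sum>s\<in>S. s $$ (r, c))"

lemma stabiliser_sum_carrier: "stabiliser_sum n S \<in> carrier_mat (2 ^ n) (2 ^ n)"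
  by (simp add: stabiliser_sum_def)

lemma index_stabiliser_sum:
  "r < 2 ^ n \<Longrightarrow> c < 2 ^ n \<Longrightarrow> stabiliser_sum n S $$ (r, c) = (\<Sum>s\<in>S. s $$ (r, c))"
  by (simp add: stabiliser_sum_def)

lemma codespace_carrier: "v \<in> codespace n S \<Longrightarrow> v \<in> carrier_vec (2 ^ n)"
  by (simp add: codespace_def)

lemma is_logical_carrier: "is_logical n S U \<Longrightarrow> U \<in> carrier_mat (2 ^ n) (2 ^ n)"
  by (simp add: is_logical_def)

context
  fixes n :: nat and S :: "complex mat set"
  assumes SG: "stabiliser_group n S"
begin

lemma stabiliser_pauli_group: "s \<in> S \<Longrightarrow> s \<in> pauli_group n"
  using SG by (auto simp: stabiliser_group_def)

lemma stabiliser_carrier: "s \<in> S \<Longrightarrow> s \<in> carrier_mat (2 ^ n) (2 ^ n)"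
  by (simp add: stabiliser_pauli_group pauli_group_carrier)

lemma finite_stabiliser: "finite S"
  using SG finite_pauli_group finite_subset by (auto simp: stabiliser_group_def)

lemma stabiliser_mult: "s \<in> S \<Longrightarrow> t \<in> S \<Longrightarrow> s * t \<in> S"
  using SG by (simp add: stabiliser_group_def)

lemma stabiliser_fixes_codespace: "s \<in> S \<Longrightarrow> v \<in> codespace n S \<Longrightarrow> s *\<^sub>v v = v"
  by (simp add: codespace_def)

lemma mat_adjoint_stabiliser_fixes_codespace:
  assumes s: "s \<in> S" and v: "v \<in> codespace n S"
  shows "mat_adjoint s *\<^sub>v v = v"
proof -
  have "mat_adjoint s *\<^sub>v v = (mat_adjoint s * s) *\<^sub>v v"
    using stabiliser_fixes_codespace[OF s v] stabiliser_carrier[OF s] codespace_carrier[OF v]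
    by (simp add: assoc_mult_mat_vec[OF mat_adjoint_carrier])
  then show ?thesis
    using pauli_group_unitary(1)[OF stabiliser_pauli_group[OF s]] codespace_carrier[OF v] by simp
qed

lemma stabiliser_mult_stabiliser_sum:
  assumes t: "t \<in> S"
  shows "t * stabiliser_sum n S = stabiliser_sum n S"
proof (rule eq_matI)
  have tc: "t \<in> carrier_mat (2 ^ n) (2 ^ n)" using stabiliser_carrier[OF t] .
  have inj: "inj_on ((*) t) S"
  proof (rule inj_onI)
    fix a b assume a: "a \<in> S" and b: "b \<in> S" and eq: "t * a = t * b"
    have "mat_adjoint t * (t * a) = mat_adjoint t * (t * b)" using eq by simp
    then show "a = b"
      using stabiliser_carrier[OF a] stabiliser_carrier[OF b] tc
        pauli_group_unitary(1)[OF stabiliser_pauli_group[OF t]]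
      by (simp flip: assoc_mult_mat[OF mat_adjoint_carrier[OF tc] tc])
  qed
  have perm: "(*) t ` S = S"
    by (rule endo_inj_surj[OF finite_stabiliser _ inj]) (use stabiliser_mult t in auto)
  fix r c assume "r < dim_row (stabiliser_sum n S)" "c < dim_col (stabiliser_sum n S)"
  then have r: "r < 2 ^ n" and c: "c < 2 ^ n" by (auto simp: stabiliser_sum_def)
  have "(t * stabiliser_sum n S) $$ (r, c) = (\<Sum>m<2 ^ n. t $$ (r, m) * stabiliser_sum n S $$ (m, c))"
    by (rule index_mult_mat_sum[OF tc stabiliser_sum_carrier r c])
  also have "\<dots> = (\<Sum>m<2 ^ n. \<Sum>s\<in>S. t $$ (r, m) * s $$ (m, c))"
    by (intro sum.cong refl) (simp add: index_stabiliser_sum c sum_distrib_left)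
  also have "\<dots> = (\<Sum>s\<in>S. (t * s) $$ (r, c))"
    by (subst sum.swap) (simp add: index_mult_mat_sum[OF tc stabiliser_carrier r c] del: index_mult_mat(1))
  also have "\<dots> = (\<Sum>s\<in>(*) t ` S. s $$ (r, c))"
    by (simp add: sum.reindex[OF inj])
  finally show "(t * stabiliser_sum n S) $$ (r, c) = stabiliser_sum n S $$ (r, c)"
    by (simp add: perm stabiliser_sum_def r c)
qed (use stabiliser_carrier[OF t] in \<open>auto simp: stabiliser_sum_def\<close>)

lemma col_stabiliser_sum_codespace:
  assumes c: "c < 2 ^ n"
  shows "col (stabiliser_sum n S) c \<in> codespace n S"
  unfolding codespace_def
proof (intro CollectI conjI ballI)
  show "col (stabiliser_sum n S) c \<in> carrier_vec (2 ^ n)"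
    by (metis col_dim carrier_matD(1) stabiliser_sum_carrier)
  fix s assume s: "s \<in> S"
  show "s *\<^sub>v col (stabiliser_sum n S) c = col (stabiliser_sum n S) c"
    using col_mult2[OF stabiliser_carrier[OF s] stabiliser_sum_carrier[of n S] c] stabiliser_mult_stabiliser_sum[OF s]
    by simp
qed

lemma mat_trace_stabiliser:
  assumes s: "s \<in> S"
  shows "mat_trace s = (if s = 1\<^sub>m (2 ^ n) then 2 ^ n else 0)"
proof (cases "s = 1\<^sub>m (2 ^ n)")
  case False
  have "mat_trace s = 0"
  proof (rule ccontr)
    assume "mat_trace s \<noteq> 0"
    then obtain k where k: "s = \<i> ^ k \<cdot>\<^sub>m 1\<^sub>m (2 ^ n)" "k < 4"
      using pauli_group_mat_trace_nonzero stabiliser_pauli_group[OF s] by blast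
    have "s * s = pauli_op n k (\<lambda>_. 0) * pauli_op n k (\<lambda>_. 0)"
      using k(1) pauli_op_identity[of n "\<lambda>_. 0" k] by simp
    also have "\<dots> = pauli_op n (k + k) (\<lambda>_. 0)"
      by (simp add: pauli_op_mult)
    also have "\<dots> = \<i> ^ (k + k) \<cdot>\<^sub>m 1\<^sub>m (2 ^ n)"
      by (simp add: pauli_op_identity)
    finally have ss: "s * s = \<i> ^ (k + k) \<cdot>\<^sub>m 1\<^sub>m (2 ^ n)" .
    have minus_one: "- 1\<^sub>m (2 ^ n) \<notin> S" and "s * s \<in> S"
      using SG s by (auto simp: stabiliser_group_def)
    moreover have "(- 1 :: complex) \<cdot>\<^sub>m 1\<^sub>m (2 ^ n) = - 1\<^sub>m (2 ^ n)"
      by (rule eq_matI) auto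
    moreover have "k = 0 \<or> k = 1 \<or> k = 2 \<or> k = 3"
      using k(2) by auto
    ultimately show False
      using False s k(1) ss by (auto simp: numeral_eq_Suc)
  qed
  then show ?thesis using False by simp
qed (simp add: mat_trace_def)

lemma mat_trace_stabiliser_sum: "mat_trace (stabiliser_sum n S) = 2 ^ n"
proof -
  have "mat_trace (stabiliser_sum n S) = (\<Sum>i<2 ^ n. \<Sum>s\<in>S. s $$ (i, i))"
    by (simp add: mat_trace_def stabiliser_sum_def)
  also have "\<dots> = (\<Sum>s\<in>S. mat_trace s)"
    by (subst sum.swap) (intro sum.cong refl, simp add: mat_trace_def carrier_matD(1)[OF stabiliser_carrier])
  also have "\<dots> = (\<Sum>s\<in>S. if s = 1\<^sub>m (2 ^ n) then 2 ^ n else 0)"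
    by (intro sum.cong refl) (simp add: mat_trace_stabiliser)
  also have "\<dots> = 2 ^ n"
    using SG finite_stabiliser by (simp add: stabiliser_group_def)
  finally show ?thesis .
qed

lemma mat_trace_mult_stabiliser_sum:
  assumes Y: "Y \<in> carrier_mat (2 ^ n) (2 ^ n)"
  shows "mat_trace (Y * stabiliser_sum n S) = (\<Sum>s\<in>S. mat_trace (Y * s))"
proof -
  have "mat_trace (Y * stabiliser_sum n S) = (\<Sum>r<2 ^ n. \<Sum>m<2 ^ n. \<Sum>s\<in>S. Y $$ (r, m) * s $$ (m, r))"
    unfolding mat_trace_def using Y
    by (intro sum.cong) (auto simp: index_mult_mat_sum[OF Y stabiliser_sum_carrier] index_stabiliser_sum
        sum_distrib_left simp del: index_mult_mat(1))
  also have "\<dots> = (\<Sum>s\<in>S. \<Sum>r<2 ^ n. \<Sum>m<2 ^ n. Y $$ (r, m) * s $$ (m, r))"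
    by (simp add: sum.swap[of _ S])
  also have "\<dots> = (\<Sum>s\<in>S. mat_trace (Y * s))"
    unfolding mat_trace_def using Y
    by (intro sum.cong refl) (auto simp: index_mult_mat_sum[OF Y stabiliser_carrier] simp del: index_mult_mat(1))
  finally show ?thesis .
qed

lemma is_logical_mult_mat_adjoint_stabiliser:
  assumes P: "is_logical n S P" and s: "s \<in> S"
  shows "is_logical n S (P * mat_adjoint s)"
    and "\<forall>v\<in>codespace n S. (P * mat_adjoint s) *\<^sub>v v = P *\<^sub>v v"
proof -
  have Pc: "P \<in> carrier_mat (2 ^ n) (2 ^ n)" and sc: "s \<in> carrier_mat (2 ^ n) (2 ^ n)"
    using P s by (simp_all add: is_logical_carrier stabiliser_carrier)
  have adj: "mat_adjoint (P * mat_adjoint s) = s * mat_adjoint P"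
    using mat_adjoint_mult[OF Pc mat_adjoint_carrier[OF sc]] mat_adjoint_adjoint[OF sc] by simp
  show agree: "\<forall>v\<in>codespace n S. (P * mat_adjoint s) *\<^sub>v v = P *\<^sub>v v"
    using Pc sc mat_adjoint_stabiliser_fixes_codespace[OF s]
    by (simp add: assoc_mult_mat_vec[OF Pc mat_adjoint_carrier[OF sc]] codespace_carrier)
  show "is_logical n S (P * mat_adjoint s)"
    unfolding is_logical_def
  proof (intro conjI ballI)
    show "P * mat_adjoint s \<in> carrier_mat (2 ^ n) (2 ^ n)"
      using Pc mat_adjoint_carrier[OF sc] by simp
    fix v assume v: "v \<in> codespace n S"
    show "(P * mat_adjoint s) *\<^sub>v v \<in> codespace n S"
      using agree v P by (simp add: is_logical_def)
    show "mat_adjoint (P * mat_adjoint s) *\<^sub>v v \<in> codespace n S"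
      using v P stabiliser_fixes_codespace[OF s] codespace_carrier[OF v]
      by (simp add: adj assoc_mult_mat_vec[OF sc mat_adjoint_carrier[OF Pc]] is_logical_def)
  qed
qed

lemma mult_stabiliser_sum_eq:
  assumes U: "U \<in> carrier_mat (2 ^ n) (2 ^ n)" and V: "V \<in> carrier_mat (2 ^ n) (2 ^ n)"
    and agree: "\<forall>v\<in>codespace n S. U *\<^sub>v v = V *\<^sub>v v"
  shows "U * stabiliser_sum n S = V * stabiliser_sum n S"
proof (rule eq_matI)
  fix r c assume "r < dim_row (V * stabiliser_sum n S)" "c < dim_col (V * stabiliser_sum n S)"
  then have r: "r < 2 ^ n" and c: "c < 2 ^ n" using V stabiliser_sum_carrier[of n S] by auto
  have "U *\<^sub>v col (stabiliser_sum n S) c = V *\<^sub>v col (stabiliser_sum n S) c"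
    using agree col_stabiliser_sum_codespace[OF c] by blast
  then have "(U *\<^sub>v col (stabiliser_sum n S) c) $ r = (V *\<^sub>v col (stabiliser_sum n S) c) $ r"
    by simp
  then show "(U * stabiliser_sum n S) $$ (r, c) = (V * stabiliser_sum n S) $$ (r, c)"
    using U V r c stabiliser_sum_carrier[of n S] by simp
qed (use U V stabiliser_sum_carrier[of n S] in auto)

end

section \<open>Pauli representatives of small weight\<close>

lemma exists_nonzero_mat_trace_stabiliser_pauli_string:
  assumes SG: "stabiliser_group n S" and P: "P \<in> pauli_group n"
    and agree: "\<forall>v\<in>codespace n S. pauli_combination n T a *\<^sub>v v = P *\<^sub>v v"
  shows "\<exists>s\<in>S. \<exists>p\<in>pauli_strings T. mat_trace (s * mat_adjoint P * pauli_op n 0 p) \<noteq> 0"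
proof -
  let ?U = "pauli_combination n T a" and ?\<Pi> = "stabiliser_sum n S"
  have Pc: "P \<in> carrier_mat (2 ^ n) (2 ^ n)" and P': "mat_adjoint P \<in> carrier_mat (2 ^ n) (2 ^ n)"
    using P by (simp_all add: pauli_group_carrier mat_adjoint_carrier)
  have U: "?U \<in> carrier_mat (2 ^ n) (2 ^ n)" and \<Pi>: "?\<Pi> \<in> carrier_mat (2 ^ n) (2 ^ n)"
    by (simp_all add: pauli_combination_carrier stabiliser_sum_carrier)
  have "2 ^ n = mat_trace ((mat_adjoint P * P) * ?\<Pi>)"
    using pauli_group_unitary(1)[OF P] \<Pi> mat_trace_stabiliser_sum[OF SG] by simp
  also have "\<dots> = mat_trace ((mat_adjoint P * ?U) * ?\<Pi>)"
    using mult_stabiliser_sum_eq[OF SG U Pc agree] P' Pc U \<Pi> by simp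
  also have "\<dots> = (\<Sum>s\<in>S. mat_trace (s * (mat_adjoint P * ?U)))"
    using mat_trace_mult_comm[OF mult_carrier_mat[OF P' U] stabiliser_carrier[OF SG]]
    by (simp add: mat_trace_mult_stabiliser_sum[OF SG mult_carrier_mat[OF P' U]])
  also have "\<dots> = (\<Sum>s\<in>S. mat_trace (s * mat_adjoint P * ?U))"
    by (intro sum.cong refl) (simp add: assoc_mult_mat[OF stabiliser_carrier[OF SG] P' U])
  also have "\<dots> = (\<Sum>s\<in>S. \<Sum>p\<in>pauli_strings T. a p * mat_trace (s * mat_adjoint P * pauli_op n 0 p))"
    by (intro sum.cong refl mat_trace_mult_pauli_combination mult_carrier_mat[OF stabiliser_carrier[OF SG] P'])
  finally show ?thesis
    by (metis (no_types, lifting) mult_zero_right sum.neutral power_not_zero zero_neq_numeral)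
qed

lemma pauli_representative_wt_le:
  assumes SG: "stabiliser_group n S" and P: "P \<in> pauli_group n" "is_logical n S P"
    and U: "U \<in> carrier_mat (2 ^ n) (2 ^ n)" and agree: "\<forall>v\<in>codespace n S. U *\<^sub>v v = P *\<^sub>v v"
  shows "\<exists>Q\<in>pauli_group n. is_logical n S Q \<and> (\<forall>v\<in>codespace n S. Q *\<^sub>v v = P *\<^sub>v v) \<and> wt n Q \<le> wt n U"
proof -
  define T where "T = {j. j < n \<and> \<not> acts_trivially_on n j U}"
  obtain a where a: "U = pauli_combination n T a"
    using exists_pauli_combination[of T n U] U by (auto simp: T_def)
  obtain s p where s: "s \<in> S" and p: "p \<in> pauli_strings T"
    and tr: "mat_trace (s * mat_adjoint P * pauli_op n 0 p) \<noteq> 0"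
    using exists_nonzero_mat_trace_stabiliser_pauli_string[OF SG P(1)] agree a by blast
  have sP: "s \<in> pauli_group n" using stabiliser_pauli_group[OF SG s] .
  have sc: "s \<in> carrier_mat (2 ^ n) (2 ^ n)" and Pc: "P \<in> carrier_mat (2 ^ n) (2 ^ n)"
    using sP P(1) by (simp_all add: pauli_group_carrier)
  define Q where "Q = P * mat_adjoint s"
  have "mat_adjoint (s * mat_adjoint P) = Q"
    unfolding Q_def using mat_adjoint_mult[OF sc mat_adjoint_carrier[OF Pc]] mat_adjoint_adjoint[OF Pc] by simp
  then obtain z where z: "Q = z \<cdot>\<^sub>m pauli_op n 0 p"
    using pauli_group_mult_mat_trace_nonzero[OF pauli_group_mult[OF sP pauli_group_mat_adjoint[OF P(1)]]
        pauli_groupI[of 0 n p] tr] p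
    by (force simp: pauli_strings_def)
  have "acts_trivially_on n j Q" if "j < n" "j \<notin> T" for j
    using p that unfolding z
    by (intro acts_trivially_on_smult pauli_op_carrier pauli_op_acts_trivially_on) (auto simp: pauli_strings_def)
  then have "wt n Q \<le> wt n U"
    unfolding wt_def by (intro card_mono) (auto simp: T_def)
  moreover have "Q \<in> pauli_group n"
    unfolding Q_def by (intro pauli_group_mult P(1) pauli_group_mat_adjoint sP)
  ultimately show ?thesis
    using is_logical_mult_mat_adjoint_stabiliser[OF SG P(2) s] unfolding Q_def by blast
qed

section \<open>Logical operators under channels of bounded spread\<close>

lemma log_dist_le_wt: "represents n S U L \<Longrightarrow> log_dist n S L \<le> wt n U"
  unfolding log_dist_def by (rule Least_le) blast

lemma log_dist_attained:
  assumes "is_logical n S L"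
  obtains U where "represents n S U L" and "wt n U = log_dist n S L"
proof -
  have "represents n S L L" using assms by (simp add: represents_def)
  then have "\<exists>w U. represents n S U L \<and> wt n U = w" by blast
  then have "\<exists>U. represents n S U L \<and> wt n U = log_dist n S L"
    unfolding log_dist_def by (rule LeastI_ex)
  then show ?thesis using that by blast
qed

lemma is_logical_conj:
  assumes A: "is_logical n S A" and L: "is_logical n S L"
  shows "is_logical n S (A * L * mat_adjoint A)"
  unfolding is_logical_def
proof (intro conjI ballI)
  have Ac: "A \<in> carrier_mat (2 ^ n) (2 ^ n)" and Lc: "L \<in> carrier_mat (2 ^ n) (2 ^ n)"
    using A L by (simp_all add: is_logical_carrier)
  note A' = mat_adjoint_carrier[OF Ac] and L' = mat_adjoint_carrier[OF Lc]
  show "A * L * mat_adjoint A \<in> carrier_mat (2 ^ n) (2 ^ n)"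
    using Ac Lc A' by simp
  have adj: "mat_adjoint (A * L * mat_adjoint A) = A * mat_adjoint L * mat_adjoint A"
    using mat_adjoint_mult[OF mult_carrier_mat[OF Ac Lc] A'] mat_adjoint_mult[OF Ac Lc] mat_adjoint_adjoint[OF Ac]
      Ac L' A' by simp
  fix v assume v: "v \<in> codespace n S"
  then have v': "v \<in> carrier_vec (2 ^ n)" by (rule codespace_carrier)
  show "A * L * mat_adjoint A *\<^sub>v v \<in> codespace n S"
    using mult_mat_vec_assoc3[OF Ac Lc A' v'] A L v by (simp add: is_logical_def)
  show "mat_adjoint (A * L * mat_adjoint A) *\<^sub>v v \<in> codespace n S"
    using mult_mat_vec_assoc3[OF Ac L' A' v'] A L v by (simp add: adj is_logical_def)
qed

lemma represents_conj_if_wt_zero: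
  assumes Q: "represents n S Q P" and P: "is_logical n S P" and A: "logical_unitary n S A"
    and wt: "wt n Q = 0"
  shows "represents n S Q (A * P * mat_adjoint A)"
  unfolding represents_def
proof (intro conjI ballI)
  show Ql: "is_logical n S Q" using Q by (simp add: represents_def)
  have Al: "is_logical n S A" using A by (simp add: logical_unitary_def)
  have Ac: "A \<in> carrier_mat (2 ^ n) (2 ^ n)" and Qc: "Q \<in> carrier_mat (2 ^ n) (2 ^ n)"
    and Pc: "P \<in> carrier_mat (2 ^ n) (2 ^ n)"
    using Al Ql P by (simp_all add: is_logical_carrier)
  note A' = mat_adjoint_carrier[OF Ac]
  have "\<forall>j<n. acts_trivially_on n j Q"
    using wt by (simp add: wt_def)
  then have "Q = Q $$ (0, 0) \<cdot>\<^sub>m 1\<^sub>m (2 ^ n)"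
    by (rule acts_trivially_on_all_imp_scalar[OF Qc])
  then have comm: "Q * A = A * Q"
    using Ac by (metis scalar_mat_commute)
  fix v assume v: "v \<in> codespace n S"
  have v': "v \<in> carrier_vec (2 ^ n)" and Av: "mat_adjoint A *\<^sub>v v \<in> codespace n S"
    using v Al by (simp_all add: codespace_carrier is_logical_def)
  have "A * P * mat_adjoint A *\<^sub>v v = A *\<^sub>v (Q *\<^sub>v (mat_adjoint A *\<^sub>v v))"
    using mult_mat_vec_assoc3[OF Ac Pc A' v'] Q Av by (simp add: represents_def)
  also have "\<dots> = (Q * A) *\<^sub>v (mat_adjoint A *\<^sub>v v)"
    using comm assoc_mult_mat_vec[OF Ac Qc] A' v' by simp
  also have "\<dots> = Q *\<^sub>v ((A * mat_adjoint A) *\<^sub>v v)"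
    using assoc_mult_mat_vec[OF Qc Ac] assoc_mult_mat_vec[OF Ac A' v'] A' v' by simp
  also have "\<dots> = Q *\<^sub>v v"
    using A v v' by (simp add: logical_unitary_def represents_def)
  finally show "Q *\<^sub>v v = A * P * mat_adjoint A *\<^sub>v v" by simp
qed

lemma spread_at_le_spread: "E \<in> pauli_group n \<Longrightarrow> spread_at n Ks E \<le> spread n Ks"
  unfolding spread_def by (rule Max_ge) (simp_all add: finite_pauli_group)

lemma spread_nonneg: "0 \<le> spread n Ks"
proof -
  have "0 \<le> spread_at n Ks (pauli_op n 0 (\<lambda>_. 0))"
    by (simp add: spread_at_def)
  also have "\<dots> \<le> spread n Ks"
    by (rule spread_at_le_spread) (simp add: pauli_groupI)
  finally show ?thesis .
qed

lemma log_dist_attained_by_pauli: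
  assumes SG: "stabiliser_group n S" and P: "logical_pauli n S P"
  obtains Q where "Q \<in> pauli_group n" and "represents n S Q P" and "wt n Q = log_dist n S P"
proof -
  have Pl: "is_logical n S P" using P by (simp add: logical_pauli_def)
  obtain P0 where P0: "P0 \<in> pauli_group n" "represents n S P0 P"
    using P by (auto simp: logical_pauli_def)
  obtain U where U: "represents n S U P" and wtU: "wt n U = log_dist n S P"
    using log_dist_attained[OF Pl] .
  have agree: "\<forall>v\<in>codespace n S. U *\<^sub>v v = P0 *\<^sub>v v" and P0l: "is_logical n S P0"
    and Uc: "U \<in> carrier_mat (2 ^ n) (2 ^ n)"
    using U P0(2) by (auto simp: represents_def intro: is_logical_carrier)
  obtain Q where Q: "Q \<in> pauli_group n" "is_logical n S Q" "\<forall>v\<in>codespace n S. Q *\<^sub>v v = P0 *\<^sub>v v"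
    and wtQ: "wt n Q \<le> wt n U"
    using pauli_representative_wt_le[OF SG P0(1) P0l Uc agree] by blast
  have QP: "represents n S Q P" using Q P0(2) by (simp add: represents_def)
  with wtQ wtU log_dist_le_wt[OF QP] show ?thesis
    using that[OF Q(1) QP] by simp
qed

lemma log_dist_conj_le:
  assumes SG: "stabiliser_group n S" and A: "logical_unitary n S A" and Ks: "implements n S Ks A"
    and P: "logical_pauli n S P"
  shows "real (log_dist n S (A * P * mat_adjoint A)) \<le> spread n Ks * real (log_dist n S P)"
proof -
  have Pl: "is_logical n S P" using P by (simp add: logical_pauli_def)
  obtain Q where Q: "Q \<in> pauli_group n" "represents n S Q P" and wtQ: "wt n Q = log_dist n S P"
    using log_dist_attained_by_pauli[OF SG P] .
  \<comment> \<open>\<open>spread_at\<close> is \<open>0 / 0 = 0\<close> on weight-zero Paulis, so a scalar \<open>Q\<close> is treated directly.\<close>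
  have "real (log_dist n S (A * P * mat_adjoint A)) \<le> spread_at n Ks Q * real (wt n Q)"
  proof (cases "wt n Q = 0")
    case True
    then show ?thesis
      using log_dist_le_wt[OF represents_conj_if_wt_zero[OF Q(2) Pl A]] by simp
  next
    case False
    have "represents n S (chan_apply n Ks Q) (A * P * mat_adjoint A)"
      using Ks Pl Q(2) by (simp add: implements_def)
    then show ?thesis
      using log_dist_le_wt False by (simp add: spread_at_def)
  qed
  also have "\<dots> \<le> spread n Ks * real (log_dist n S P)"
    using spread_at_le_spread[OF Q(1), of Ks] wtQ by (simp add: mult_right_mono)
  finally show ?thesis .
qed

lemma log_dist_div_code_dist_conj_le:
  assumes "stabiliser_group n S" "logical_unitary n S A" "implements n S Ks A" "logical_pauli n S P"
    and K: "spread n Ks \<le> K" and C: "real (log_dist n S P) / real (code_dist n S) \<le> C"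
  shows "real (log_dist n S (A * P * mat_adjoint A)) / real (code_dist n S) \<le> K * C"
proof -
  have "real (log_dist n S (A * P * mat_adjoint A)) \<le> K * real (log_dist n S P)"
    using log_dist_conj_le[OF assms(1-4)] K by (meson mult_right_mono of_nat_0_le_iff order_trans)
  then have "real (log_dist n S (A * P * mat_adjoint A)) / real (code_dist n S) \<le>
      K * (real (log_dist n S P) / real (code_dist n S))"
    by (simp add: divide_right_mono)
  also have "\<dots> \<le> K * C"
    using C K spread_nonneg[of n Ks] by (intro mult_left_mono) auto
  finally show ?thesis .
qed

theorem lemma2:
  fixes n :: "nat \<Rightarrow> nat" and S :: "nat \<Rightarrow> complex mat set"
    and Ks :: "nat \<Rightarrow> complex mat list" and A :: "nat \<Rightarrow> complex mat"
    and P :: "nat \<Rightarrow> complex mat"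
  assumes "stabiliser_family n S"
    and "\<forall>l. logical_unitary (n l) (S l) (A l)"
    and "\<forall>l. implements (n l) (S l) (Ks l) (A l)"
    and "bounded_spread n Ks"
    and "\<forall>l. logical_pauli (n l) (S l) (P l)"
  shows "P \<in> P_down n S \<longrightarrow> (\<lambda>l. A l * P l * mat_adjoint (A l)) \<in> L_down n S"
proof
  assume "P \<in> P_down n S"
  then obtain C where C: "\<And>l. real (log_dist (n l) (S l) (P l)) / real (code_dist (n l) (S l)) \<le> C"
    by (auto simp: P_down_def L_down_def)
  obtain K where K: "\<And>l. spread (n l) (Ks l) \<le> K"
    using assms(4) by (auto simp: bounded_spread_def)
  have "real (log_dist (n l) (S l) (A l * P l * mat_adjoint (A l))) / real (code_dist (n l) (S l)) \<le> K * C"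
    for l
    using log_dist_div_code_dist_conj_le[OF _ _ _ _ K C] assms(1,2,3,5)
    by (simp add: stabiliser_family_def)
  moreover have "is_logical (n l) (S l) (A l * P l * mat_adjoint (A l))" for l
    using assms(2,5) is_logical_conj by (auto simp: logical_unitary_def logical_pauli_def)
  ultimately show "(\<lambda>l. A l * P l * mat_adjoint (A l)) \<in> L_down n S"
    by (auto simp: L_down_def)
qed

end
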